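(* Let $X$ be a Banach space and $Y$ a normed space over $K$, let $M>0$, and let $\{F_\alpha\}_{\alpha\in I}$ ($I$ an index set) be a family of continuous $M$-contraction operators from $X$ into $Y$. Suppose that (a) for every $x\in X$ there is a positive number $c_x$ with $\|F_\alpha(x)\|_Y\le c_x$ for every $\alpha\in I$; and (b) there exists a positive constant $L$ such that $\|F_\alpha(x_1+x_2)\|_Y\le L\,\|F_\alpha(x_1)+F_\alpha(x_2)\|_Y$ for every $\alpha\in I$ and all $x_1,x_2\in X$. Then $\{F_\alpha\}$ is uniformly norm bounded, i.e., there is a positive constant $c$ with $\|F_\alpha\|_{B(X,Y)}\le c$ for every $\alpha\in I$.
   Context: $K$ is $\mathbb{R}$ or $\mathbb{C}$; all normed spaces are nontrivial. Operators are arbitrary (not necessarily linear) maps. For normed spaces $X,Y$ and a map $F:X\to Y$, set $\|F\|_{B(X,Y)}=\max\left(\sup_{x\neq 0,x\in X}\frac{\|F(x)\|_Y}{\|x\|_X},\ \|F(0)\|_Y\right)\in[0,\infty]$, and let $B(X,Y)$ be the set of maps $F:X\to Y$ with $\|F\|_{B(X,Y)}<\infty$. An operator $F:X\to Y$ is an $M$-contraction operator if $\|F(kx)\|_Y\le M|k|\,\|F(x)\|_Y$ for every scalar $k\neq 0$ and every $x\neq 0$ in $X$. *)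

theory Defs
  imports "HOL-Analysis.Analysis"
begin

definition Bnorm :: "('a::real_normed_vector \<Rightarrow> 'b::real_normed_vector) \<Rightarrow> ereal" where
  "Bnorm F = max (SUP x\<in>{x. x \<noteq> 0}. ereal (norm (F x) / norm x)) (ereal (norm (F 0)))"

definition M_contraction :: "real \<Rightarrow> ('a::real_normed_vector \<Rightarrow> 'b::real_normed_vector) \<Rightarrow> bool" where
  "M_contraction M F \<longleftrightarrow>
     (\<forall>k::real. \<forall>x. k \<noteq> 0 \<longrightarrow> x \<noteq> 0 \<longrightarrow> norm (F (k *\<^sub>R x)) \<le> M * \<bar>k\<bar> * norm (F x))"

end

theory Submission
  imports Defs
begin

text \<open>The sets where all \<open>\<parallel>F\<^sub>\<alpha> x\<parallel> \<le> n\<close> are closed and cover the Banach space \<open>X\<close>, so by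
  Baire's theorem one of them contains a ball \<open>B(x\<^sub>0, r)\<close>. Quasi-additivity with
  \<open>z = (x\<^sub>0 + z) + (-x\<^sub>0)\<close> moves this uniform bound to the ball \<open>B(0, r)\<close>, and the
  \<open>M\<close>-contraction property rescales any \<open>x \<noteq> 0\<close> into that ball, giving
  \<open>\<parallel>F\<^sub>\<alpha> x\<parallel> \<le> c \<parallel>x\<parallel>\<close> uniformly in \<open>\<alpha>\<close>.\<close>

lemma Baire_uniformly_bounded_on_ball:
  fixes g :: "'i \<Rightarrow> 'a::complete_space \<Rightarrow> real"
  assumes cont: "\<forall>i\<in>I. continuous_on UNIV (g i)"
    and pointwise: "\<forall>x. \<exists>c. \<forall>i\<in>I. g i x \<le> c"
  shows "\<exists>x0 r B. r > 0 \<and> (\<forall>i\<in>I. \<forall>x\<in>ball x0 r. g i x \<le> B)"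
proof -
  define E where "E n = (\<Inter>i\<in>I. {x. g i x \<le> real n})" for n :: nat
  have closed_E: "closed (E n)" for n
    unfolding E_def using cont by (intro closed_INT ballI closed_Collect_le) auto
  have cover: "\<Union>(range E) = UNIV"
  proof (intro set_eqI iffI)
    fix x :: 'a
    obtain c where c: "\<forall>i\<in>I. g i x \<le> c" using pointwise by blast
    obtain n :: nat where "c \<le> real n" using real_arch_simple by blast
    with c have "x \<in> E n" unfolding E_def by force
    then show "x \<in> \<Union>(range E)" by blast
  qed auto
  have "\<exists>n. interior (E n) \<noteq> {}"
  proof (rule ccontr)
    assume "\<nexists>n. interior (E n) \<noteq> {}"
    then have "euclidean interior_of \<Union>(range E) = {}"
      using closed_E by (intro Baire_category_alt) (auto simp: completely_metrizable_space_euclidean)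
    then show False using cover by simp
  qed
  then obtain n x0 where "x0 \<in> interior (E n)" by blast
  then obtain r where "r > 0" "ball x0 r \<subseteq> E n" using mem_interior by blast
  then show ?thesis unfolding E_def by blast
qed

lemma quasi_additive_bounded_near_zero:
  fixes F :: "'a::real_normed_vector \<Rightarrow> 'b::real_normed_vector"
  assumes quasi_add: "\<forall>x1 x2. norm (F (x1 + x2)) \<le> L * norm (F x1 + F x2)"
    and "L \<ge> 0"
    and ball_bound: "\<forall>x\<in>ball x0 r. norm (F x) \<le> B"
    and "norm (F (- x0)) \<le> C"
    and "norm z < r"
  shows "norm (F z) \<le> L * (B + C)"
proof -
  have "x0 + z \<in> ball x0 r" using \<open>norm z < r\<close> by (simp add: dist_norm)
  then have "norm (F (x0 + z)) \<le> B" using ball_bound by blast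
  have "norm (F z) = norm (F ((x0 + z) + - x0))" by simp
  also have "\<dots> \<le> L * norm (F (x0 + z) + F (- x0))" using quasi_add by blast
  also have "\<dots> \<le> L * (norm (F (x0 + z)) + norm (F (- x0)))"
    using \<open>L \<ge> 0\<close> by (intro mult_left_mono norm_triangle_ineq)
  also have "\<dots> \<le> L * (B + C)"
    using \<open>L \<ge> 0\<close> \<open>norm (F (x0 + z)) \<le> B\<close> \<open>norm (F (- x0)) \<le> C\<close> by (intro mult_left_mono) auto
  finally show ?thesis .
qed

lemma M_contraction_norm_ratio_le:
  fixes F :: "'a::real_normed_vector \<Rightarrow> 'b::real_normed_vector"
  assumes contr: "M_contraction M F" and "M \<ge> 0" and "r > 0"
    and small: "\<And>z. norm z < r \<Longrightarrow> norm (F z) \<le> K"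
    and "x \<noteq> 0"
  shows "norm (F x) / norm x \<le> 2 * M * K / r"
proof -
  define k where "k = 2 * norm x / r"
  define y where "y = (r / (2 * norm x)) *\<^sub>R x"
  have "k > 0" using \<open>x \<noteq> 0\<close> \<open>r > 0\<close> unfolding k_def by simp
  have x_eq: "x = k *\<^sub>R y" using \<open>x \<noteq> 0\<close> \<open>r > 0\<close> unfolding k_def y_def by simp
  have norm_y: "norm y = r / 2" using \<open>x \<noteq> 0\<close> \<open>r > 0\<close> unfolding y_def by simp
  then have "y \<noteq> 0" using \<open>r > 0\<close> by auto
  have "norm (F x) \<le> M * \<bar>k\<bar> * norm (F y)"
    using contr \<open>k > 0\<close> \<open>y \<noteq> 0\<close> unfolding M_contraction_def x_eq by (metis less_irrefl)
  also have "\<dots> \<le> M * k * K"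
    using small[of y] norm_y \<open>r > 0\<close> \<open>k > 0\<close> \<open>M \<ge> 0\<close> by (simp add: mult_left_mono)
  finally have "norm (F x) / norm x \<le> M * k * K / norm x"
    by (simp add: divide_right_mono)
  also have "\<dots> = 2 * M * K / r" using \<open>x \<noteq> 0\<close> unfolding k_def by (simp add: field_simps)
  finally show ?thesis .
qed

lemma Bnorm_le_ereal:
  assumes "\<And>x. x \<noteq> 0 \<Longrightarrow> norm (F x) / norm x \<le> c" and "norm (F 0) \<le> c"
  shows "Bnorm F \<le> ereal c"
  using assms unfolding Bnorm_def by (auto intro!: SUP_least)

theorem theorem3:
  fixes F :: "'i \<Rightarrow> 'a::banach \<Rightarrow> 'b::real_normed_vector"
    and I :: "'i set" and M :: real
  assumes X_nontriv: "\<exists>x::'a. x \<noteq> 0"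
    and Y_nontriv: "\<exists>y::'b. y \<noteq> 0"
    and M_pos: "M > 0"
    and cont: "\<forall>\<alpha>\<in>I. continuous_on UNIV (F \<alpha>)"
    and contr: "\<forall>\<alpha>\<in>I. M_contraction M (F \<alpha>)"
    and pointwise: "\<forall>x. \<exists>c>0. \<forall>\<alpha>\<in>I. norm (F \<alpha> x) \<le> c"
    and quasi_add: "\<exists>L>0. \<forall>\<alpha>\<in>I. \<forall>x1 x2. norm (F \<alpha> (x1 + x2)) \<le> L * norm (F \<alpha> x1 + F \<alpha> x2)"
  shows "\<exists>c>0. \<forall>\<alpha>\<in>I. Bnorm (F \<alpha>) \<le> ereal c"
proof -
  have "\<forall>\<alpha>\<in>I. continuous_on UNIV (\<lambda>x. norm (F \<alpha> x))"
    using cont by (auto intro: continuous_intros)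
  moreover have "\<forall>x. \<exists>c. \<forall>\<alpha>\<in>I. norm (F \<alpha> x) \<le> c" using pointwise by blast
  ultimately obtain x0 r B where "r > 0" and ball_bound: "\<forall>\<alpha>\<in>I. \<forall>x\<in>ball x0 r. norm (F \<alpha> x) \<le> B"
    using Baire_uniformly_bounded_on_ball[of I "\<lambda>\<alpha> x. norm (F \<alpha> x)"] by blast
  obtain L where "L > 0" and L: "\<forall>\<alpha>\<in>I. \<forall>x1 x2. norm (F \<alpha> (x1 + x2)) \<le> L * norm (F \<alpha> x1 + F \<alpha> x2)"
    using quasi_add by blast
  obtain C where C: "\<forall>\<alpha>\<in>I. norm (F \<alpha> (- x0)) \<le> C" using pointwise by blast
  define K where "K = L * (B + C)"
  have small: "norm (F \<alpha> z) \<le> K" if "\<alpha> \<in> I" "norm z < r" for \<alpha> z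
    unfolding K_def using that L ball_bound C \<open>L > 0\<close>
    by (intro quasi_additive_bounded_near_zero[of "F \<alpha>"]) auto
  define c where "c = max 1 (max (2 * M * K / r) K)"
  have "Bnorm (F \<alpha>) \<le> ereal c" if "\<alpha> \<in> I" for \<alpha>
  proof (rule Bnorm_le_ereal)
    show "norm (F \<alpha> x) / norm x \<le> c" if "x \<noteq> 0" for x
      using M_contraction_norm_ratio_le[of M "F \<alpha>" r K x] contr M_pos \<open>r > 0\<close> small \<open>\<alpha> \<in> I\<close> \<open>x \<noteq> 0\<close>
      unfolding c_def by fastforce
    show "norm (F \<alpha> 0) \<le> c" using small[OF \<open>\<alpha> \<in> I\<close>, of 0] \<open>r > 0\<close> unfolding c_def by simp
  qed
  moreover have "c > 0" unfolding c_def by simp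
  ultimately show ?thesis by blast
qed

end
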